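(* Let $n\ge 1$. If $1<k\le n$, then \begin{align*} \mathcal{H}_k^f(\theta_1,\dots,\theta_{2n})=\;&\mathcal{H}_k^f(\theta_3,\dots,\theta_{2n})\;\oplus\;\mathcal{H}_1^f(\theta_1,\theta_2)\otimes\mathcal{H}_{k-1}^f(\theta_3,\dots,\theta_{2n})\\ &\oplus\;\Big[\theta_1\theta_2+\frac{1}{k-n-1}\big(\theta_3\theta_4+\dots+\theta_{2n-1}\theta_{2n}\big)\Big]\mathcal{H}_{k-2}^f(\theta_3,\dots,\theta_{2n}). \end{align*} If $k=1$, then $\mathcal{H}_1^f(\theta_1,\dots,\theta_{2n})=\mathcal{H}_1^f(\theta_3,\dots,\theta_{2n})\oplus\mathcal{H}_1^f(\theta_1,\theta_2)$.
   Context: Let $\theta_1,\dots,\theta_{2n}$ be generators of the real Grassmann algebra $\Lambda_{2n}$ (anticommuting: $\theta_i\theta_j=-\theta_j\theta_i$), with Grassmann derivatives $\partial_{\theta_j}$. For a list of variables $\theta_{2a-1},\theta_{2a},\dots,\theta_{2b-1},\theta_{2b}$, the fermionic Laplacian is $\Delta_f=4\sum_{j=a}^{b}\partial_{\theta_{2j-1}}\partial_{\theta_{2j}}$, and $\mathcal{H}_k^f(\theta_{2a-1},\dots,\theta_{2b})$ denotes the space of elements of the Grassmann algebra generated by these variables which are homogeneous of degree $k$ and annihilated by this $\Delta_f$ (fermionic spherical harmonics); $\mathcal{H}_0^f$ consists of the constants. All these spaces are regarded as subspaces of $\Lambda_{2n}$. $\mathcal{H}_1^f(\theta_1,\theta_2)\otimes\mathcal{H}_{k-1}^f(\theta_3,\dots,\theta_{2n})$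 denotes the linear span of products $ab$ with $a$, $b$ in the respective spaces, and $p\,\mathcal{H}$ denotes $\{p h: h\in\mathcal{H}\}$. The sums are direct sums of subspaces. *)

theory Defs
  imports Complex_Main
begin

text \<open>Elements of the real Grassmann algebra are represented as coefficient functions
  on monomials: an element f corresponds to the sum over finite sets S of
  f S times theta_S, where theta_S is the product of the generators theta_i, i in S,
  taken in increasing order of indices. Elements of Lambda_2n are those
  supported on subsets of the index set 1..2n.\<close>

type_synonym grass = "nat set \<Rightarrow> real"

definition gzero :: grass where "gzero = (\<lambda>_. 0)"

definition gadd :: "grass \<Rightarrow> grass \<Rightarrow> grass" where
  "gadd f g = (\<lambda>S. f S + g S)"

definition gscale :: "real \<Rightarrow> grass \<Rightarrow> grass" where
  "gscale c f = (\<lambda>S. c * f S)"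

definition theta :: "nat \<Rightarrow> grass" where
  "theta i = (\<lambda>S. if S = {i} then 1 else 0)"

text \<open>Sign of the permutation sorting the concatenation of theta_A and theta_B
  (both in increasing order): (-1) to the number of inversions.\<close>
definition gsign :: "nat set \<Rightarrow> nat set \<Rightarrow> real" where
  "gsign A B = (-1) ^ card {(i, j). i \<in> A \<and> j \<in> B \<and> j < i}"

definition gmul :: "grass \<Rightarrow> grass \<Rightarrow> grass" where
  "gmul f g = (\<lambda>S. \<Sum>A\<in>Pow S. gsign A (S - A) * f A * g (S - A))"

text \<open>Left Grassmann derivative with respect to theta_j:
  it maps theta_j theta_S to theta_S (j not in S) and kills monomials without theta_j.\<close>
definition gderiv :: "nat \<Rightarrow> grass \<Rightarrow> grass" where
  "gderiv j f = (\<lambda>S. if j \<in> S then 0 else (-1) ^ card {i \<in> S. i < j} * f (insert j S))"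

definition flap :: "nat \<Rightarrow> nat \<Rightarrow> grass \<Rightarrow> grass" where
  "flap a b f = (\<lambda>S. 4 * (\<Sum>j=a..b. gderiv (2*j - 1) (gderiv (2*j) f) S))"

definition fharm :: "nat \<Rightarrow> nat \<Rightarrow> nat \<Rightarrow> grass set" where
  "fharm k a b = {f. (\<forall>S. f S \<noteq> 0 \<longrightarrow> S \<subseteq> {2*a - 1 .. 2*b} \<and> card S = k)
                       \<and> flap a b f = gzero}"

definition gspan :: "grass set \<Rightarrow> grass set" where
  "gspan X = {f. \<exists>(m::nat) (c::nat \<Rightarrow> real) (x::nat \<Rightarrow> grass). (\<forall>i<m. x i \<in> X) \<and> f = (\<lambda>S. \<Sum>i<m. c i * x i S)}"

definition dsum2 :: "grass set \<Rightarrow> grass set \<Rightarrow> grass set \<Rightarrow> bool" where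
  "dsum2 V A B \<longleftrightarrow>
     V = {gadd a b | a b. a \<in> A \<and> b \<in> B} \<and>
     (\<forall>a\<in>A. \<forall>b\<in>B. gadd a b = gzero \<longrightarrow> a = gzero \<and> b = gzero)"

definition dsum3 :: "grass set \<Rightarrow> grass set \<Rightarrow> grass set \<Rightarrow> grass set \<Rightarrow> bool" where
  "dsum3 V A B C \<longleftrightarrow>
     V = {gadd (gadd a b) c | a b c. a \<in> A \<and> b \<in> B \<and> c \<in> C} \<and>
     (\<forall>a\<in>A. \<forall>b\<in>B. \<forall>c\<in>C. gadd (gadd a b) c = gzero \<longrightarrow> a = gzero \<and> b = gzero \<and> c = gzero)"

end

(*
  Write f = f0 + theta_1 f1 + theta_2 f2 + theta_1 theta_2 f12 with coefficients free of
  theta_1, theta_2. If D is the Laplacian in theta_3, ..., theta_2n, then f is harmonic iff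
  f1, f2, f12 are D-harmonic and D f0 = 4 f12. The mixed part theta_1 f1 + theta_2 f2 is the
  middle summand. For the rest, the sl2-relation D (omega h) = 4 (k - n - 1) h for
  h in H_(k-2)(theta_3, ..., theta_2n), where omega = theta_3 theta_4 + ... + theta_(2n-1) theta_2n,
  shows that (theta_1 theta_2 + omega / (k - n - 1)) f12 is harmonic with theta_1 theta_2-coefficient
  f12; subtracting it leaves a harmonic element free of theta_1, theta_2. Directness follows by
  reading off these coefficients again.
  The Laplacian is handled as -4 times the contraction, whose coefficient at theta_S sums the
  coefficients of theta_S theta_(2j-1) theta_2j over the pairs j disjoint from S.
*)

theory Submission
  imports Defs
begin

section \<open>Pairs of generators and the contraction\<close>

definition pair :: "nat \<Rightarrow> nat set" where
  "pair j = {2*j - 1, 2*j}"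

lemma pair_one: "pair 1 = {1, 2}" "pair (Suc 0) = {1, 2}"
  unfolding pair_def by simp_all

lemma pair_eq_atLeastAtMost: "1 \<le> j \<Longrightarrow> pair j = {2*j - 1 .. 2*j}"
  unfolding pair_def by auto

lemma pair_disjoint: "1 \<le> i \<Longrightarrow> 1 \<le> j \<Longrightarrow> i \<noteq> j \<Longrightarrow> pair i \<inter> pair j = {}"
  unfolding pair_def by auto

lemma pair_nonempty: "pair j \<noteq> {}"
  unfolding pair_def by auto

lemma card_pair: "1 \<le> j \<Longrightarrow> card (pair j) = 2"
  unfolding pair_def by simp

lemma pair_subset_atLeastAtMost: "a \<le> j \<Longrightarrow> j \<le> b \<Longrightarrow> pair j \<subseteq> {2*a - 1 .. 2*b}"
  unfolding pair_def by auto

lemma pair_ge_3: "2 \<le> j \<Longrightarrow> x \<in> pair j \<Longrightarrow> 3 \<le> x"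
  unfolding pair_def by auto

lemma pair_disjoint_one: "2 \<le> j \<Longrightarrow> pair j \<inter> pair 1 = {}"
  using pair_disjoint[of j 1] by auto

lemma subset_tail_if_disjoint_pair_one:
  assumes "T \<subseteq> {1..2*n}" "pair 1 \<inter> T = {}"
  shows "T \<subseteq> {3..2*n}"
proof
  fix x assume "x \<in> T"
  with assms have "1 \<le> x" "x \<le> 2*n" "x \<noteq> 1" "x \<noteq> 2" by (auto simp: pair_one)
  then show "x \<in> {3..2*n}" by simp
qed

abbreviation free_pairs :: "nat \<Rightarrow> nat \<Rightarrow> nat set \<Rightarrow> nat set" where
  "free_pairs a b S \<equiv> {j\<in>{a..b}. pair j \<inter> S = {}}"

abbreviation full_pairs :: "nat \<Rightarrow> nat \<Rightarrow> nat set \<Rightarrow> nat set" where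
  "full_pairs a b S \<equiv> {j\<in>{a..b}. pair j \<subseteq> S}"

definition contract :: "nat \<Rightarrow> nat \<Rightarrow> grass \<Rightarrow> grass" where
  "contract a b f S = (\<Sum>j\<in>free_pairs a b S. f (S \<union> pair j))"

lemma gderiv_gderiv_pair:
  assumes "1 \<le> j"
  shows "gderiv (2*j - 1) (gderiv (2*j) f) S = (if pair j \<inter> S = {} then - f (S \<union> pair j) else 0)"
proof (cases "pair j \<inter> S = {}")
  case False
  then show ?thesis by (auto simp: gderiv_def pair_def)
next
  case True
  define m where "m = card {i \<in> S. i < 2*j - 1}"
  have "{i \<in> insert (2*j - 1) S. i < 2*j} = insert (2*j - 1) {i \<in> S. i < 2*j - 1}"
    using assms True by (auto simp: pair_def)
  moreover have "finite {i \<in> S. i < 2*j - 1}"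
    by (rule finite_subset[of _ "{..<2*j - 1}"]) auto
  ultimately have m: "card {i \<in> insert (2*j - 1) S. i < 2*j} = Suc m"
    unfolding m_def by simp
  have "2*j - 1 \<notin> S" "2*j \<notin> insert (2*j - 1) S"
    using assms True by (auto simp: pair_def)
  then have "gderiv (2*j - 1) (gderiv (2*j) f) S
      = (-1) ^ card {i \<in> S. i < 2*j - 1} *
        ((-1) ^ card {i \<in> insert (2*j - 1) S. i < 2*j} * f (insert (2*j) (insert (2*j - 1) S)))"
    unfolding gderiv_def by simp
  also have "\<dots> = (-1) ^ m * ((-1) ^ Suc m * f (insert (2*j) (insert (2*j - 1) S)))"
    unfolding m m_def ..
  also have "insert (2*j) (insert (2*j - 1) S) = S \<union> pair j"
    by (auto simp: pair_def)
  also have "(-1) ^ m * ((-1) ^ Suc m * f (S \<union> pair j)) = - f (S \<union> pair j)"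
    by (induct m) auto
  finally show ?thesis
    using True by simp
qed

lemma flap_eq_contract:
  assumes "1 \<le> a"
  shows "flap a b f S = -4 * contract a b f S"
proof -
  have "(\<Sum>j=a..b. gderiv (2*j - 1) (gderiv (2*j) f) S)
      = (\<Sum>j=a..b. if pair j \<inter> S = {} then - f (S \<union> pair j) else 0)"
    using assms by (intro sum.cong refl gderiv_gderiv_pair) auto
  also have "\<dots> = - contract a b f S"
    unfolding contract_def by (simp add: sum.inter_filter[symmetric] sum_negf)
  finally show ?thesis
    unfolding flap_def by simp
qed

definition homog :: "grass \<Rightarrow> nat \<Rightarrow> nat \<Rightarrow> nat \<Rightarrow> bool" where
  "homog f k a b \<longleftrightarrow> (\<forall>S. f S \<noteq> 0 \<longrightarrow> S \<subseteq> {2*a - 1 .. 2*b} \<and> card S = k)"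

lemma fharm_iff:
  assumes "1 \<le> a"
  shows "f \<in> fharm k a b \<longleftrightarrow> homog f k a b \<and> (\<forall>S. contract a b f S = 0)"
  using flap_eq_contract[OF assms] unfolding fharm_def homog_def gzero_def by (auto simp: fun_eq_iff)

lemma homog_finite: "homog f k a b \<Longrightarrow> f S \<noteq> 0 \<Longrightarrow> finite S"
  unfolding homog_def using finite_subset by blast

lemma homog_tail_vanishes: "homog f k 2 n \<Longrightarrow> pair 1 \<inter> S \<noteq> {} \<Longrightarrow> f S = 0"
  unfolding homog_def by (force simp: pair_one)

lemma homog_mono_range:
  assumes "homog f k a b" "a' \<le> a" "b \<le> b'"
  shows "homog f k a' b'"
proof -
  have "{2*a - 1 .. 2*b} \<subseteq> {2*a' - 1 .. 2*b'}"
    using assms(2,3) by auto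
  with assms(1) show ?thesis
    unfolding homog_def by blast
qed

lemma homog_lincomb:
  "homog f k a b \<Longrightarrow> homog g k a b \<Longrightarrow> homog (\<lambda>S. u * f S + v * g S) k a b"
  unfolding homog_def by force

lemma homog_sum:
  "(\<And>j. j \<in> J \<Longrightarrow> homog (f j) k a b) \<Longrightarrow> homog (\<lambda>S. \<Sum>j\<in>J. f j S) k a b"
  unfolding homog_def by (metis sum.neutral)

lemma contract_lincomb:
  "contract a b (\<lambda>S. \<Sum>i<m. c i * x i S) T = (\<Sum>i<m. c i * contract a b (x i) T)"
  unfolding contract_def by (simp add: sum_distrib_left sum.swap[where B = "{..<m}"])

lemma contract_lincomb2:
  "contract a b (\<lambda>S. u * f S + v * g S) T = u * contract a b f T + v * contract a b g T"
  unfolding contract_def by (simp add: sum_distrib_left sum.distrib)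

lemma contract_split_first:
  assumes "a \<le> b"
  shows "contract a b f T = (if pair a \<inter> T = {} then f (T \<union> pair a) else 0) + contract (Suc a) b f T"
proof -
  have "free_pairs a b T = (if pair a \<inter> T = {} then insert a else id) (free_pairs (Suc a) b T)"
    using assms by (auto simp: Suc_le_eq order_le_less)
  then show ?thesis
    unfolding contract_def by auto
qed

lemma contract_restrict:
  assumes "\<forall>j\<in>{a..b}. pair j \<inter> X = {} \<and> pair j \<inter> Y = {}"
  shows "contract a b (\<lambda>T. if Y \<inter> T = {} then f (T \<union> X) else 0) T
       = (if Y \<inter> T = {} then contract a b f (T \<union> X) else 0)"
proof (cases "Y \<inter> T = {}")
  case True
  have "{j\<in>{a..b}. pair j \<inter> T = {}} = {j\<in>{a..b}. pair j \<inter> (T \<union> X) = {}}"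
    using assms True by blast
  moreover have "Y \<inter> (T \<union> pair j) = {}" "T \<union> pair j \<union> X = (T \<union> X) \<union> pair j"
    if "j \<in> {a..b}" for j
    using that assms True by auto
  ultimately show ?thesis
    using True unfolding contract_def by (auto intro!: sum.cong)
next
  case False
  then show ?thesis
    unfolding contract_def by (auto intro!: sum.neutral split: if_splits)
qed

lemma fharm_lincomb:
  assumes "1 \<le> a" "f \<in> fharm k a b" "g \<in> fharm k a b"
  shows "(\<lambda>S. u * f S + v * g S) \<in> fharm k a b"
  using assms(2,3) unfolding fharm_iff[OF assms(1)] contract_lincomb2 by (simp add: homog_lincomb)

lemma fharm_gadd: "1 \<le> a \<Longrightarrow> f \<in> fharm k a b \<Longrightarrow> g \<in> fharm k a b \<Longrightarrow> gadd f g \<in> fharm k a b"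
  using fharm_lincomb[of a f k b g 1 1] by (simp add: gadd_def)

lemma fharm_one_iff:
  assumes "1 \<le> a"
  shows "f \<in> fharm 1 a b \<longleftrightarrow> homog f 1 a b"
proof -
  have "contract a b f T = 0" if "homog f 1 a b" for T
    unfolding contract_def
  proof (intro sum.neutral ballI)
    fix j assume "j \<in> free_pairs a b T"
    show "f (T \<union> pair j) = 0"
    proof (rule ccontr)
      assume "f (T \<union> pair j) \<noteq> 0"
      with that have "card (T \<union> pair j) = 1" "finite (T \<union> pair j)"
        using homog_finite unfolding homog_def by blast+
      moreover have "card (pair j) = 2"
        using \<open>j \<in> free_pairs a b T\<close> assms by (simp add: card_pair)
      ultimately show False
        using card_mono[of "T \<union> pair j" "pair j"] by simp
    qed
  qed
  then show ?thesis
    using fharm_iff[OF assms] by blast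
qed

lemma gspan_support:
  assumes "\<And>x S. x \<in> X \<Longrightarrow> x S \<noteq> 0 \<Longrightarrow> R S" "y \<in> gspan X" "y S \<noteq> 0"
  shows "R S"
proof -
  obtain m and c :: "nat \<Rightarrow> real" and x :: "nat \<Rightarrow> grass" where "\<forall>i<m. x i \<in> X" "y = (\<lambda>S. \<Sum>i<m. c i * x i S)"
    using assms(2) unfolding gspan_def by blast
  with assms(3) obtain i where "i < m" "x i S \<noteq> 0"
    by (metis (no_types, lifting) lessThan_iff mult_zero_right sum.neutral)
  with \<open>\<forall>i<m. x i \<in> X\<close> assms(1) show ?thesis
    by blast
qed

lemma gspan_subset_fharm:
  assumes "1 \<le> a" "X \<subseteq> fharm k a b"
  shows "gspan X \<subseteq> fharm k a b"
proof
  fix y assume "y \<in> gspan X"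
  then obtain m and c :: "nat \<Rightarrow> real" and x :: "nat \<Rightarrow> grass"
    where x: "\<forall>i<m. x i \<in> X" and y: "y = (\<lambda>S. \<Sum>i<m. c i * x i S)"
    unfolding gspan_def by auto
  have X: "\<forall>z. z \<in> X \<longrightarrow> homog z k a b \<and> (\<forall>S. contract a b z S = 0)"
    using assms(2) unfolding subset_iff fharm_iff[OF assms(1)] .
  have "homog y k a b"
    unfolding homog_def
  proof (intro allI impI)
    fix S assume "y S \<noteq> 0"
    show "S \<subseteq> {2*a - 1 .. 2*b} \<and> card S = k"
      by (rule gspan_support[OF _ \<open>y \<in> gspan X\<close> \<open>y S \<noteq> 0\<close>]) (use X in \<open>auto simp: homog_def\<close>)
  qed
  moreover have "contract a b y S = 0" for S
    using x X unfolding y contract_lincomb by simp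
  ultimately show "y \<in> fharm k a b"
    unfolding fharm_iff[OF assms(1)] by simp
qed

lemma gadd_mem_gspan: "x \<in> X \<Longrightarrow> y \<in> X \<Longrightarrow> gadd x y \<in> gspan X"
  unfolding gspan_def gadd_def
  by (rule CollectI, rule exI[of _ 2], rule exI[of _ "\<lambda>_. 1"],
      rule exI[of _ "\<lambda>i. if i = 0 then x else y"]) (simp add: numeral_2_eq_2)

section \<open>Products with monomials\<close>

text \<open>The product \<open>\<theta>\<^sub>X h\<close>, computed without sign; this is correct when \<open>X\<close> is a pair
  (\<open>gmul_theta_pair\<close>) or precedes the support of \<open>h\<close> (\<open>gmul_theta_left\<close>).\<close>
definition lmul_mono :: "nat set \<Rightarrow> grass \<Rightarrow> grass" where
  "lmul_mono X h = (\<lambda>S. if X \<subseteq> S then h (S - X) else 0)"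

lemma homog_lmul_mono:
  assumes "homog h d a b" "X \<subseteq> {2*a' - 1 .. 2*b}" "a' \<le> a" "finite X"
  shows "homog (lmul_mono X h) (d + card X) a' b"
  unfolding homog_def
proof (intro allI impI)
  fix S assume "lmul_mono X h S \<noteq> 0"
  then have "X \<subseteq> S" "h (S - X) \<noteq> 0"
    unfolding lmul_mono_def by (auto split: if_splits)
  then have "S - X \<subseteq> {2*a - 1 .. 2*b}" "card (S - X) = d"
    using assms(1) unfolding homog_def by auto
  moreover have "finite S"
    using \<open>card (S - X) = d\<close> \<open>h (S - X) \<noteq> 0\<close> assms(1,4) homog_finite by fastforce
  moreover have "{2*a - 1 .. 2*b} \<subseteq> {2*a' - 1 .. 2*b}"
    using assms(3) by auto
  moreover have "card S = card (S - X) + card X"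
    using \<open>finite S\<close> \<open>X \<subseteq> S\<close> by (metis card_Diff_subset card_mono finite_subset le_add_diff_inverse2)
  ultimately show "S \<subseteq> {2*a' - 1 .. 2*b} \<and> card S = d + card X"
    using \<open>X \<subseteq> S\<close> assms(2) by auto
qed

lemma contract_lmul_mono:
  assumes "\<forall>j\<in>{a..b}. pair j \<inter> X = {}"
  shows "contract a b (lmul_mono X f) T = (if X \<subseteq> T then contract a b f (T - X) else 0)"
proof (cases "X \<subseteq> T")
  case True
  have "{j\<in>{a..b}. pair j \<inter> T = {}} = {j\<in>{a..b}. pair j \<inter> (T - X) = {}}"
    using assms True by blast
  moreover have "T \<union> pair j - X = (T - X) \<union> pair j" if "j \<in> {a..b}" for j
    using that assms by auto
  ultimately show ?thesis
    using True unfolding contract_def lmul_mono_def by (auto intro!: sum.cong)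
next
  case False
  have "\<not> X \<subseteq> T \<union> pair j" if "j \<in> {a..b}" for j
    using that assms False by blast
  with False show ?thesis
    unfolding contract_def lmul_mono_def by (auto intro!: sum.neutral)
qed

lemma gmul_infinite: "infinite S \<Longrightarrow> gmul f g S = 0"
  unfolding gmul_def by simp

lemma gmul_indicator_left:
  assumes "finite S"
  shows "gmul (\<lambda>A. if A = X then 1 else 0) h S = (if X \<subseteq> S then gsign X (S - X) * h (S - X) else 0)"
proof -
  have "gmul (\<lambda>A. if A = X then 1 else 0) h S
      = (\<Sum>A\<in>Pow S. if A = X then gsign X (S - X) * h (S - X) else 0)"
    unfolding gmul_def by (intro sum.cong) auto
  then show ?thesis
    using assms by simp
qed

lemma gmul_gadd_left: "gmul (gadd f g) h = gadd (gmul f h) (gmul g h)"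
  unfolding gmul_def gadd_def by (auto simp: fun_eq_iff algebra_simps sum.distrib)

lemma gmul_gscale_left: "gmul (gscale c f) h = gscale c (gmul f h)"
  unfolding gmul_def gscale_def by (auto simp: fun_eq_iff algebra_simps sum_distrib_left)

lemma gmul_sum_left: "gmul (\<lambda>S. \<Sum>j\<in>J. f j S) h T = (\<Sum>j\<in>J. gmul (f j) h T)"
  unfolding gmul_def by (simp add: sum_distrib_left sum_distrib_right sum.swap[where B = J])

lemma gsign_singleton_left:
  assumes "\<forall>x\<in>B. i \<le> x"
  shows "gsign {i} B = 1"
proof -
  have "{(i', x). i' \<in> {i} \<and> x \<in> B \<and> x < i'} = {}"
    using assms by auto
  then show ?thesis
    unfolding gsign_def by (simp only:) simp
qed

text \<open>Each element of \<open>B\<close> below the pair gives two inversions.\<close>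
lemma gsign_pair_left:
  assumes "1 \<le> j" "pair j \<inter> B = {}"
  shows "gsign (pair j) B = 1"
proof -
  define X where "X = {x \<in> B. x < 2*j - 1}"
  have "finite X"
    unfolding X_def by (rule finite_subset[of _ "{..<2*j - 1}"]) auto
  have "x < 2*j \<longleftrightarrow> x < 2*j - 1" if "x \<in> B" for x
  proof -
    have "x \<noteq> 2*j - 1"
      using that assms(2) by (auto simp: pair_def)
    with assms(1) show ?thesis by arith
  qed
  then have "{(i, x). i \<in> pair j \<and> x \<in> B \<and> x < i} = {2*j - 1} \<times> X \<union> {2*j} \<times> X"
    unfolding X_def pair_def by auto
  moreover have "{2*j - 1} \<times> X \<inter> {2*j} \<times> X = {}"
    using assms(1) by auto
  ultimately have "card {(i, x). i \<in> pair j \<and> x \<in> B \<and> x < i} = 2 * card X"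
    using \<open>finite X\<close> by (simp add: card_Un_disjoint card_cartesian_product)
  then show ?thesis
    unfolding gsign_def by (simp add: power_mult)
qed

lemma gmul_theta_theta:
  assumes "i < j"
  shows "gmul (theta i) (theta j) = (\<lambda>S. if S = {i, j} then 1 else 0)"
proof
  fix S
  show "gmul (theta i) (theta j) S = (if S = {i, j} then 1 else 0)"
  proof (cases "finite S")
    case True
    have "gsign {i} {j} = 1"
      using assms by (intro gsign_singleton_left) auto
    with True assms show ?thesis
      unfolding theta_def gmul_indicator_left[OF True] by auto
  qed (auto simp: gmul_infinite)
qed

lemma gmul_theta_pair:
  assumes "1 \<le> j" "\<forall>S. h S \<noteq> 0 \<longrightarrow> finite S"
  shows "gmul (gmul (theta (2*j - 1)) (theta (2*j))) h = lmul_mono (pair j) h"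
proof
  fix S
  have pair_prod: "gmul (theta (2*j - 1)) (theta (2*j)) = (\<lambda>S. if S = pair j then 1 else 0)"
    using assms(1) by (subst gmul_theta_theta) (auto simp: pair_def)
  show "gmul (gmul (theta (2*j - 1)) (theta (2*j))) h S = lmul_mono (pair j) h S"
  proof (cases "finite S")
    case True
    then show ?thesis
      using gsign_pair_left[OF assms(1), of "S - pair j"]
      unfolding pair_prod gmul_indicator_left[OF True] lmul_mono_def by auto
  next
    case False
    then have "h (S - pair j) = 0"
      using assms(2) by (auto simp: pair_def)
    with False show ?thesis
      by (simp add: gmul_infinite lmul_mono_def)
  qed
qed

lemma gmul_theta_left:
  assumes "\<forall>S. h S \<noteq> 0 \<longrightarrow> finite S \<and> (\<forall>x\<in>S. i < x)"
  shows "gmul (theta i) h = lmul_mono {i} h"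
proof
  fix S
  show "gmul (theta i) h S = lmul_mono {i} h S"
  proof (cases "finite S")
    case True
    have "gsign {i} (S - {i}) * h (S - {i}) = h (S - {i})"
    proof (cases "h (S - {i}) = 0")
      case False
      then have "\<forall>x\<in>S - {i}. i \<le> x"
        using assms by (meson less_imp_le)
      then show ?thesis
        by (simp add: gsign_singleton_left)
    qed simp
    then show ?thesis
      unfolding theta_def gmul_indicator_left[OF True] lmul_mono_def by simp
  next
    case False
    then have "h (S - {i}) = 0"
      using assms by auto
    with False show ?thesis
      by (simp add: gmul_infinite lmul_mono_def)
  qed
qed

definition omega :: "nat \<Rightarrow> nat \<Rightarrow> grass" where
  "omega a b = (\<lambda>S. \<Sum>j=a..b. gmul (theta (2*j - 1)) (theta (2*j)) S)"

definition omega_mul :: "nat \<Rightarrow> nat \<Rightarrow> grass \<Rightarrow> grass" where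
  "omega_mul a b h S = (\<Sum>j\<in>full_pairs a b S. h (S - pair j))"

lemma omega_mul_eq_sum: "omega_mul a b h S = (\<Sum>j=a..b. lmul_mono (pair j) h S)"
  unfolding omega_mul_def lmul_mono_def by (simp add: sum.inter_filter[symmetric])

lemma gmul_omega_left:
  assumes "1 \<le> a" "\<forall>S. h S \<noteq> 0 \<longrightarrow> finite S"
  shows "gmul (omega a b) h = omega_mul a b h"
proof
  fix S
  have "gmul (omega a b) h S = (\<Sum>j=a..b. gmul (gmul (theta (2*j - 1)) (theta (2*j))) h S)"
    unfolding omega_def gmul_sum_left ..
  also have "\<dots> = omega_mul a b h S"
    unfolding omega_mul_eq_sum using assms by (intro sum.cong refl, subst gmul_theta_pair) auto
  finally show "gmul (omega a b) h S = omega_mul a b h S" .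
qed

lemma homog_omega_mul:
  assumes "homog h d a b" "1 \<le> a"
  shows "homog (omega_mul a b h) (d + 2) a b"
  unfolding omega_mul_eq_sum
proof (rule homog_sum)
  fix j assume "j \<in> {a..b}"
  then have "homog (lmul_mono (pair j) h) (d + card (pair j)) a b"
    using assms(1) by (intro homog_lmul_mono pair_subset_atLeastAtMost) (auto simp: pair_def)
  with \<open>j \<in> {a..b}\<close> assms(2) show "homog (lmul_mono (pair j) h) (d + 2) a b"
    by (simp add: card_pair)
qed

section \<open>Contraction after multiplication by \<open>\<omega>\<close>\<close>

lemma card_eq_sum_card_Int_pair:
  assumes "1 \<le> a" "T \<subseteq> {2*a - 1 .. 2*b}"
  shows "card T = (\<Sum>j\<in>{a..b}. card (T \<inter> pair j))"
proof -
  have T_union: "T = (\<Union>j\<in>{a..b}. T \<inter> pair j)"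
  proof (intro equalityI subsetI)
    fix x assume "x \<in> T"
    then have "2*a - 1 \<le> x" "x \<le> 2*b"
      using assms(2) by auto
    define j where "j = (x + 1) div 2"
    have "x \<in> pair j" "j \<in> {a..b}"
      using \<open>2*a - 1 \<le> x\<close> \<open>x \<le> 2*b\<close> assms(1) unfolding pair_def j_def by auto
    with \<open>x \<in> T\<close> show "x \<in> (\<Union>j\<in>{a..b}. T \<inter> pair j)" by blast
  qed auto
  have "finite T"
    using assms(2) finite_subset by blast
  moreover have "\<forall>i\<in>{a..b}. \<forall>j\<in>{a..b}. i \<noteq> j \<longrightarrow> (T \<inter> pair i) \<inter> (T \<inter> pair j) = {}"
  proof (intro ballI impI)
    fix i j assume "i \<in> {a..b}" "j \<in> {a..b}" "i \<noteq> j"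
    then have "pair i \<inter> pair j = {}"
      using assms(1) by (intro pair_disjoint) auto
    then show "(T \<inter> pair i) \<inter> (T \<inter> pair j) = {}" by blast
  qed
  ultimately have "card (\<Union>j\<in>{a..b}. T \<inter> pair j) = (\<Sum>j\<in>{a..b}. card (T \<inter> pair j))"
    by (intro card_UN_disjoint) auto
  then show ?thesis
    using T_union by simp
qed

lemma card_pairs_balance:
  assumes "1 \<le> a" "T \<subseteq> {2*a - 1 .. 2*b}"
  shows "card T + card (free_pairs a b T) = (b + 1 - a) + card (full_pairs a b T)"
proof -
  have "card (T \<inter> pair j) + (if pair j \<inter> T = {} then 1 else 0) = 1 + (if pair j \<subseteq> T then 1 else 0)"
    if "1 \<le> j" for j
    using that by (cases "2*j - 1 \<in> T"; cases "2*j \<in> T") (auto simp: pair_def Int_insert_right)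
  then have "card T + (\<Sum>j\<in>{a..b}. if pair j \<inter> T = {} then 1 else 0)
      = (\<Sum>j\<in>{a..b}. 1 + (if pair j \<subseteq> T then 1 else 0))"
    using assms by (simp add: card_eq_sum_card_Int_pair sum.distrib[symmetric])
  moreover have "(\<Sum>j\<in>{a..b}. 1 + (if pair j \<subseteq> T then 1 else 0)) = (b + 1 - a) + card (full_pairs a b T)"
    unfolding sum.distrib by (simp add: sum.inter_filter[symmetric])
  ultimately show ?thesis
    by (simp add: sum.inter_filter[symmetric])
qed

lemma omega_mul_union_free_pair:
  assumes "1 \<le> a" "j \<in> free_pairs a b T"
  shows "omega_mul a b h (T \<union> pair j) = h T + (\<Sum>i\<in>full_pairs a b T. h ((T - pair i) \<union> pair j))"
proof -
  have disj: "pair i \<inter> pair j = {}" if "i \<in> {a..b}" "i \<noteq> j" for i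
    using that assms pair_disjoint[of i j] by auto
  have "full_pairs a b (T \<union> pair j) = insert j (full_pairs a b T)"
    using assms(2) disj by blast
  moreover have "j \<notin> full_pairs a b T"
    using assms(2) pair_nonempty by blast
  moreover have "T \<union> pair j - pair j = T"
    using assms(2) by auto
  moreover have "T \<union> pair j - pair i = (T - pair i) \<union> pair j" if "i \<in> full_pairs a b T" for i
    using that assms(2) disj by blast
  ultimately show ?thesis
    unfolding omega_mul_def by simp
qed

lemma contract_diff_full_pair:
  assumes "1 \<le> a" "i \<in> full_pairs a b T"
  shows "contract a b h (T - pair i) = h T + (\<Sum>j\<in>free_pairs a b T. h ((T - pair i) \<union> pair j))"
proof -
  have disj: "pair i \<inter> pair j = {}" if "j \<in> {a..b}" "j \<noteq> i" for j
    using that assms pair_disjoint[of i j] by auto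
  have "free_pairs a b (T - pair i) = insert i (free_pairs a b T)"
    using assms(2) disj by blast
  moreover have "i \<notin> free_pairs a b T"
    using assms(2) pair_nonempty by blast
  moreover have "(T - pair i) \<union> pair i = T"
    using assms(2) by auto
  ultimately show ?thesis
    unfolding contract_def by simp
qed

text \<open>The cross terms cancel by harmonicity at \<open>T - pair i\<close>; what remains is counted by
  \<open>card_pairs_balance\<close>.\<close>
lemma contract_omega_mul:
  assumes "1 \<le> a" "homog h d a b" "\<forall>S. contract a b h S = 0"
  shows "contract a b (omega_mul a b h) T = (real (b + 1 - a) - real d) * h T"
proof -
  let ?D = "free_pairs a b T" and ?C = "full_pairs a b T"
  have cross: "(\<Sum>j\<in>?D. h ((T - pair i) \<union> pair j)) = - h T" if "i \<in> ?C" for i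
    using contract_diff_full_pair[OF assms(1) that, of h] assms(3) by simp
  have "contract a b (omega_mul a b h) T = (\<Sum>j\<in>?D. h T + (\<Sum>i\<in>?C. h ((T - pair i) \<union> pair j)))"
    unfolding contract_def using assms(1) by (intro sum.cong refl omega_mul_union_free_pair)
  also have "\<dots> = real (card ?D) * h T + (\<Sum>i\<in>?C. \<Sum>j\<in>?D. h ((T - pair i) \<union> pair j))"
    by (simp add: sum.distrib) (rule sum.swap)
  also have "\<dots> = (real (card ?D) - real (card ?C)) * h T"
    using cross by (simp add: algebra_simps)
  also have "\<dots> = (real (b + 1 - a) - real d) * h T"
  proof (cases "h T = 0")
    case False
    then have "T \<subseteq> {2*a - 1 .. 2*b}" "card T = d"
      using assms(2) unfolding homog_def by auto
    then have "d + card ?D = (b + 1 - a) + card ?C"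
      using card_pairs_balance[OF assms(1)] by blast
    then show ?thesis by simp
  qed simp
  finally show ?thesis .
qed

section \<open>Splitting off the first pair\<close>

lemma contract_split_pair_one:
  "1 \<le> n \<Longrightarrow> contract 1 n f T = (if pair 1 \<inter> T = {} then f (T \<union> pair 1) else 0) + contract 2 n f T"
  using contract_split_first[of 1 n f T, unfolded Suc_1] .

lemma fharm_tail_subset:
  assumes "1 \<le> n"
  shows "fharm k 2 n \<subseteq> fharm k 1 n"
proof
  fix f assume "f \<in> fharm k 2 n"
  then have hom: "homog f k 2 n" and con: "\<forall>S. contract 2 n f S = 0"
    by (simp_all add: fharm_iff)
  have "contract 1 n f T = 0" for T
  proof -
    have "f (T \<union> pair 1) = 0"
      by (rule homog_tail_vanishes[OF hom]) (auto simp: pair_one)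
    with con show ?thesis
      unfolding contract_split_pair_one[OF assms] by simp
  qed
  with homog_mono_range[OF hom _ order_refl] show "f \<in> fharm k 1 n"
    by (simp add: fharm_iff)
qed

lemma fharm_tail_if_vanishes:
  assumes "1 \<le> n" "f \<in> fharm k 1 n" "\<And>S. pair 1 \<inter> S \<noteq> {} \<Longrightarrow> f S = 0"
  shows "f \<in> fharm k 2 n"
proof -
  have hom: "homog f k 1 n" and con: "\<forall>T. contract 1 n f T = 0"
    using assms(2) by (simp_all add: fharm_iff)
  have "homog f k 2 n"
    unfolding homog_def
  proof (intro allI impI)
    fix S assume "f S \<noteq> 0"
    with assms(3) hom have "S \<subseteq> {1..2*n}" "card S = k" "pair 1 \<inter> S = {}"
      unfolding homog_def by auto
    then show "S \<subseteq> {2*2 - 1 .. 2*n} \<and> card S = k"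
      using subset_tail_if_disjoint_pair_one by simp
  qed
  moreover have "contract 2 n f T = 0" for T
  proof -
    have "f (T \<union> pair 1) = 0"
      by (rule assms(3)) (auto simp: pair_one)
    then have "contract 1 n f T = contract 2 n f T"
      unfolding contract_split_pair_one[OF assms(1)] by simp
    with con show ?thesis by simp
  qed
  ultimately show ?thesis
    by (simp add: fharm_iff)
qed

lemma omega_mul_tail_vanishes:
  assumes "homog h d 2 n" "pair 1 \<inter> S \<noteq> {}"
  shows "omega_mul 2 n h S = 0"
  unfolding omega_mul_def
proof (intro sum.neutral ballI)
  fix j assume "j \<in> full_pairs 2 n S"
  then have "pair j \<inter> pair 1 = {}"
    by (intro pair_disjoint_one) simp
  with assms(2) have "pair 1 \<inter> (S - pair j) \<noteq> {}"
    by blast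
  then show "h (S - pair j) = 0"
    by (rule homog_tail_vanishes[OF assms(1)])
qed

definition pair_factor :: "real \<Rightarrow> nat \<Rightarrow> grass" where
  "pair_factor c n = gadd (gmul (theta 1) (theta 2)) (gscale c (omega 2 n))"

lemma gmul_pair_factor:
  assumes "homog h d 2 n"
  shows "gmul (pair_factor c n) h = (\<lambda>S. lmul_mono (pair 1) h S + c * omega_mul 2 n h S)"
proof -
  have fin: "\<forall>S. h S \<noteq> 0 \<longrightarrow> finite S"
    using homog_finite[OF assms] by blast
  have "gmul (gmul (theta 1) (theta 2)) h = lmul_mono (pair 1) h"
    using gmul_theta_pair[OF _ fin, of 1] by simp
  moreover have "gmul (omega 2 n) h = omega_mul 2 n h"
    using gmul_omega_left[OF _ fin] by simp
  ultimately show ?thesis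
    unfolding pair_factor_def gmul_gadd_left gmul_gscale_left by (simp add: gadd_def gscale_def)
qed

lemma gmul_pair_factor_first_pair:
  assumes "homog h d 2 n" "pair 1 \<inter> T = {}"
  shows "gmul (pair_factor c n) h (T \<union> pair 1) = h T"
proof -
  have "T \<union> pair 1 - pair 1 = T"
    using assms(2) by blast
  moreover have "omega_mul 2 n h (T \<union> pair 1) = 0"
    by (rule omega_mul_tail_vanishes[OF assms(1)]) (simp add: pair_one)
  ultimately show ?thesis
    unfolding gmul_pair_factor[OF assms(1)] lmul_mono_def by simp
qed

lemma homog_gmul_pair_factor:
  assumes "1 \<le> n" "2 \<le> k" "homog h (k - 2) 2 n"
  shows "homog (gmul (pair_factor c n) h) k 1 n"
proof -
  have "homog (lmul_mono (pair 1) h) (k - 2 + card (pair 1)) 1 n"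
    by (rule homog_lmul_mono[OF assms(3)]) (use assms(1) in \<open>auto simp: pair_one\<close>)
  then have pair_part: "homog (lmul_mono (pair 1) h) k 1 n"
    using assms(2) card_pair[of 1] by simp
  have "homog (omega_mul 2 n h) (k - 2 + 2) 2 n"
    by (rule homog_omega_mul[OF assms(3)]) simp
  then have "homog (omega_mul 2 n h) k 2 n"
    unfolding le_add_diff_inverse2[OF assms(2)] .
  then have omega_part: "homog (omega_mul 2 n h) k 1 n"
    by (rule homog_mono_range) simp_all
  show ?thesis
    unfolding gmul_pair_factor[OF assms(3)] using homog_lincomb[OF pair_part omega_part, of 1 c] by simp
qed

lemma contract_gmul_pair_factor:
  assumes "1 \<le> n" "2 \<le> k" "h \<in> fharm (k - 2) 2 n"
  shows "contract 1 n (gmul (pair_factor c n) h) T = (1 + c * (real n - real k + 1)) * h T"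
proof -
  have hh: "homog h (k - 2) 2 n" and hc: "\<forall>S. contract 2 n h S = 0"
    using assms(3) by (simp_all add: fharm_iff)
  have "contract 2 n (lmul_mono (pair 1) h) T = 0"
    using hc pair_disjoint_one by (subst contract_lmul_mono) auto
  moreover have "contract 2 n (omega_mul 2 n h) T = (real n - real k + 1) * h T"
    using contract_omega_mul[OF _ hh hc, of T] assms(1,2) by simp
  ultimately have tail: "contract 2 n (gmul (pair_factor c n) h) T = c * (real n - real k + 1) * h T"
    unfolding gmul_pair_factor[OF hh] contract_lincomb2[of _ _ 1, simplified] by simp
  show ?thesis
  proof (cases "pair 1 \<inter> T = {}")
    case True
    with tail gmul_pair_factor_first_pair[OF hh True] show ?thesis
      unfolding contract_split_pair_one[OF assms(1)] by (simp add: algebra_simps)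
  next
    case False
    with tail homog_tail_vanishes[OF hh False] show ?thesis
      unfolding contract_split_pair_one[OF assms(1)] by simp
  qed
qed

lemma pair_factor_mul_fharm:
  assumes "1 \<le> n" "2 \<le> k" "k \<le> n" "h \<in> fharm (k - 2) 2 n"
  shows "gmul (pair_factor (1 / (real k - real n - 1)) n) h \<in> fharm k 1 n"
proof -
  have "1 + 1 / (real k - real n - 1) * (real n - real k + 1) = 0"
    using assms(3) by (simp add: field_simps)
  moreover have "homog h (k - 2) 2 n"
    using assms(4) by (simp add: fharm_iff)
  ultimately show ?thesis
    using homog_gmul_pair_factor[OF assms(1,2)] contract_gmul_pair_factor[OF assms(1,2,4)]
    by (simp add: fharm_iff)
qed

lemma fharm_111_eq:
  assumes "a \<in> fharm 1 1 1"
  shows "a = gadd (gscale (a {1}) (theta 1)) (gscale (a {2}) (theta 2))"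
proof
  fix A
  have "A = {1} \<or> A = {2}" if "a A \<noteq> 0"
  proof -
    have "A \<subseteq> {1..2}" "card A = 1"
      using that assms unfolding fharm_one_iff[OF order_refl] homog_def by auto
    then obtain x where "A = {x}" "x \<in> {1..2}"
      by (metis card_1_singletonE insert_subset)
    then show ?thesis
      by (auto simp: le_Suc_eq numeral_2_eq_2)
  qed
  then show "a A = gadd (gscale (a {1}) (theta 1)) (gscale (a {2}) (theta 2)) A"
    by (cases "a A = 0") (auto simp: gadd_def gscale_def theta_def)
qed

lemma theta_mem_fharm_111:
  assumes "i \<in> {1, 2}"
  shows "theta i \<in> fharm 1 1 1"
  unfolding fharm_one_iff[OF order_refl] homog_def theta_def using assms by (simp; elim disjE; simp)

lemma gmul_theta_tail:
  assumes "i \<le> 2" "homog b d 2 n"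
  shows "gmul (theta i) b = lmul_mono {i} b"
proof (rule gmul_theta_left, intro allI impI conjI)
  fix S assume "b S \<noteq> 0"
  then have "S \<subseteq> {3..2*n}"
    using assms(2) unfolding homog_def by simp
  then show "finite S"
    by (rule finite_subset) simp
  show "\<forall>x\<in>S. i < x"
    using \<open>S \<subseteq> {3..2*n}\<close> assms(1) by auto
qed

lemma lmul_theta_tail_support:
  assumes "i \<in> {1, 2}" "homog b d 2 n" "lmul_mono {i} b S \<noteq> 0"
  shows "(1 \<in> S) \<noteq> (2 \<in> S)"
proof -
  have "i \<in> S" "b (S - {i}) \<noteq> 0"
    using assms(3) unfolding lmul_mono_def by (auto split: if_splits)
  then have "pair 1 \<inter> (S - {i}) = {}"
    using homog_tail_vanishes[OF assms(2), of "S - {i}"] by argo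
  then have "1 \<notin> S - {i}" "2 \<notin> S - {i}"
    unfolding pair_one by simp_all
  with \<open>i \<in> S\<close> assms(1) show ?thesis
    by (cases "i = 1") auto
qed

lemma lmul_theta_tail_fharm:
  assumes "1 \<le> n" "1 \<le> k" "i \<in> {1, 2}" "b \<in> fharm (k - 1) 2 n"
  shows "lmul_mono {i} b \<in> fharm k 1 n"
proof -
  have hb: "homog b (k - 1) 2 n" and cb: "\<forall>S. contract 2 n b S = 0"
    using assms(4) by (simp_all add: fharm_iff)
  have "homog (lmul_mono {i} b) (k - 1 + card {i}) 1 n"
    by (rule homog_lmul_mono[OF hb]) (use assms(1,3) in auto)
  then have "homog (lmul_mono {i} b) k 1 n"
    using assms(2) by simp
  moreover have "contract 1 n (lmul_mono {i} b) T = 0" for T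
  proof -
    have "pair 1 \<inter> (T \<union> pair 1 - {i}) \<noteq> {}"
      using assms(3) by (auto simp: pair_one)
    then have "lmul_mono {i} b (T \<union> pair 1) = 0"
      unfolding lmul_mono_def using homog_tail_vanishes[OF hb] by simp
    moreover have "\<forall>j\<in>{2..n}. pair j \<inter> {i} = {}"
      using assms(3) pair_ge_3[of _ i] by auto
    then have "contract 2 n (lmul_mono {i} b) T = 0"
      using cb by (simp add: contract_lmul_mono)
    ultimately show ?thesis
      unfolding contract_split_pair_one[OF assms(1)] by simp
  qed
  ultimately show ?thesis
    by (simp add: fharm_iff)
qed

lemma mixed_product_eq:
  assumes "a \<in> fharm 1 1 1" "homog b d 2 n"
  shows "gmul a b = (\<lambda>S. a {1} * lmul_mono {1} b S + a {2} * lmul_mono {2} b S)"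
proof -
  have "gmul (theta 1) b = lmul_mono {1} b" "gmul (theta 2) b = lmul_mono {2} b"
    using gmul_theta_tail[OF _ assms(2)] by simp_all
  then show ?thesis
    by (subst fharm_111_eq[OF assms(1)], unfold gmul_gadd_left gmul_gscale_left) (simp add: gadd_def gscale_def)
qed

abbreviation mixed_products :: "nat \<Rightarrow> nat \<Rightarrow> grass set" where
  "mixed_products k n \<equiv> {gmul a b | a b. a \<in> fharm 1 1 1 \<and> b \<in> fharm (k - 1) 2 n}"

lemma mixed_span_subset_fharm:
  assumes "1 \<le> n" "1 \<le> k"
  shows "gspan (mixed_products k n) \<subseteq> fharm k 1 n"
proof (rule gspan_subset_fharm; clarify)
  fix a b assume "a \<in> fharm 1 1 1" "b \<in> fharm (k - 1) 2 n"
  then have "homog b (k - 1) 2 n"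
    by (simp add: fharm_iff)
  with \<open>a \<in> fharm 1 1 1\<close> have "gmul a b = (\<lambda>S. a {1} * lmul_mono {1} b S + a {2} * lmul_mono {2} b S)"
    by (rule mixed_product_eq)
  moreover have "lmul_mono {i} b \<in> fharm k 1 n" if "i \<in> {1, 2}" for i
    using lmul_theta_tail_fharm[OF assms that \<open>b \<in> fharm (k - 1) 2 n\<close>] .
  ultimately show "gmul a b \<in> fharm k 1 n"
    by (simp add: fharm_lincomb)
qed

lemma mixed_span_support:
  assumes "y \<in> gspan (mixed_products k n)" "y S \<noteq> 0"
  shows "(1 \<in> S) \<noteq> (2 \<in> S)"
proof (rule gspan_support[OF _ assms])
  fix x T assume "x \<in> mixed_products k n" "x T \<noteq> 0"
  then obtain a b where "a \<in> fharm 1 1 1" "b \<in> fharm (k - 1) 2 n" "x = gmul a b"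
    by blast
  then have hb: "homog b (k - 1) 2 n" and "x = (\<lambda>S. a {1} * lmul_mono {1} b S + a {2} * lmul_mono {2} b S)"
    using mixed_product_eq by (auto simp: fharm_iff)
  with \<open>x T \<noteq> 0\<close> obtain i where "i \<in> {1, 2}" "lmul_mono {i} b T \<noteq> 0"
    by (cases "lmul_mono {1} b T = 0") auto
  then show "(1 \<in> T) \<noteq> (2 \<in> T)"
    using lmul_theta_tail_support[OF _ hb] by blast
qed

text \<open>For \<open>f = f\<^sub>0 + \<theta>\<^sub>1 f\<^sub>1 + \<theta>\<^sub>2 f\<^sub>2 + \<theta>\<^sub>1\<theta>\<^sub>2 f\<^sub>1\<^sub>2\<close> with coefficients free of
  \<open>\<theta>\<^sub>1, \<theta>\<^sub>2\<close>, this is \<open>f\<^sub>1\<close>, \<open>f\<^sub>2\<close> or \<open>f\<^sub>1\<^sub>2\<close> for \<open>X = {1}, {2}, pair 1\<close>.\<close>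
definition first_pair_coeff :: "nat set \<Rightarrow> grass \<Rightarrow> grass" where
  "first_pair_coeff X f T = (if pair 1 \<inter> T = {} then f (T \<union> X) else 0)"

lemma homog_first_pair_coeff:
  assumes "homog f k 1 n" "X \<subseteq> pair 1"
  shows "homog (first_pair_coeff X f) (k - card X) 2 n"
  unfolding homog_def
proof (intro allI impI)
  fix T assume "first_pair_coeff X f T \<noteq> 0"
  then have T: "pair 1 \<inter> T = {}" "f (T \<union> X) \<noteq> 0"
    unfolding first_pair_coeff_def by (auto split: if_splits)
  then have "T \<union> X \<subseteq> {1..2*n}" "card (T \<union> X) = k"
    using assms(1) unfolding homog_def by auto
  moreover have "finite T" "finite X"
    using \<open>T \<union> X \<subseteq> {1..2*n}\<close> finite_subset by auto
  moreover have "T \<inter> X = {}"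
    using T(1) assms(2) by blast
  ultimately have "T \<subseteq> {3..2*n}" "card T = k - card X"
    using T(1) subset_tail_if_disjoint_pair_one by (auto simp: card_Un_disjoint)
  then show "T \<subseteq> {2*2 - 1 .. 2*n} \<and> card T = k - card X"
    by simp
qed

lemma first_pair_coeff_fharm:
  assumes "1 \<le> n" "f \<in> fharm k 1 n" "X \<subseteq> pair 1" "X \<noteq> {}"
  shows "first_pair_coeff X f \<in> fharm (k - card X) 2 n"
proof -
  have hf: "homog f k 1 n" and cf: "\<forall>T. contract 1 n f T = 0"
    using assms(2) by (simp_all add: fharm_iff)
  have "contract 2 n (first_pair_coeff X f) T = 0" for T
  proof -
    have "\<forall>j\<in>{2..n}. pair j \<inter> X = {} \<and> pair j \<inter> pair 1 = {}"
    proof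
      fix j assume "j \<in> {2..n}"
      then have "pair j \<inter> pair 1 = {}"
        by (intro pair_disjoint_one) simp
      with assms(3) show "pair j \<inter> X = {} \<and> pair j \<inter> pair 1 = {}"
        by blast
    qed
    then have "contract 2 n (first_pair_coeff X f) T
        = (if pair 1 \<inter> T = {} then contract 2 n f (T \<union> X) else 0)"
      using contract_restrict[of 2 n X "pair 1" f T] unfolding first_pair_coeff_def[abs_def] by simp
    moreover have "pair 1 \<inter> (T \<union> X) \<noteq> {}"
      using assms(3,4) by blast
    with cf have "contract 2 n f (T \<union> X) = 0"
      using contract_split_pair_one[OF assms(1), of f "T \<union> X"] by simp
    ultimately show ?thesis
      by simp
  qed
  with homog_first_pair_coeff[OF hf assms(3)] show ?thesis
    by (simp add: fharm_iff)
qed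

lemma first_pair_expansion:
  assumes "pair 1 \<inter> S \<noteq> {}"
  shows "f S = lmul_mono {1} (first_pair_coeff {1} f) S + lmul_mono {2} (first_pair_coeff {2} f) S
             + lmul_mono (pair 1) (first_pair_coeff (pair 1) f) S"
proof -
  have S: "1 \<in> S \<or> 2 \<in> S"
    using assms by (auto simp: pair_one)
  have "S - {1} \<union> {1} = S" if "1 \<in> S" "2 \<notin> S"
    using that by auto
  moreover have "S - {2} \<union> {2} = S" if "2 \<in> S" "1 \<notin> S"
    using that by auto
  moreover have "S - pair 1 \<union> pair 1 = S" if "1 \<in> S" "2 \<in> S"
    using that by (auto simp: pair_one)
  ultimately show ?thesis
    using S unfolding lmul_mono_def first_pair_coeff_def by (auto simp: pair_one)
qed

lemma first_pair_mixed_part: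
  assumes "1 \<le> n" "f \<in> fharm k 1 n"
  defines "y \<equiv> gadd (gmul (theta 1) (first_pair_coeff {1} f)) (gmul (theta 2) (first_pair_coeff {2} f))"
  shows "y \<in> gspan (mixed_products k n)"
    and "y S = lmul_mono {1} (first_pair_coeff {1} f) S + lmul_mono {2} (first_pair_coeff {2} f) S"
proof -
  have B: "first_pair_coeff {i} f \<in> fharm (k - 1) 2 n" if "i \<in> {1, 2}" for i
    using first_pair_coeff_fharm[OF assms(1,2), of "{i}"] that by (auto simp: pair_one)
  have "gmul (theta i) (first_pair_coeff {i} f) \<in> mixed_products k n" if "i \<in> {1, 2}" for i
    using theta_mem_fharm_111[OF that] B[OF that] by blast
  then show "y \<in> gspan (mixed_products k n)"
    unfolding y_def by (intro gadd_mem_gspan) simp_all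
  show "y S = lmul_mono {1} (first_pair_coeff {1} f) S + lmul_mono {2} (first_pair_coeff {2} f) S"
    using gmul_theta_tail[of 1 "first_pair_coeff {1} f" "k - 1" n]
      gmul_theta_tail[of 2 "first_pair_coeff {2} f" "k - 1" n] B
    unfolding y_def by (simp add: fharm_iff gadd_def)
qed

lemma fharm_decompose:
  assumes "1 \<le> n" "1 < k" "k \<le> n" "f \<in> fharm k 1 n"
  obtains x y h where "x \<in> fharm k 2 n" "y \<in> gspan (mixed_products k n)" "h \<in> fharm (k - 2) 2 n"
    "f = gadd (gadd x y) (gmul (pair_factor (1 / (real k - real n - 1)) n) h)"
proof -
  define y where "y = gadd (gmul (theta 1) (first_pair_coeff {1} f)) (gmul (theta 2) (first_pair_coeff {2} f))"
  define h where "h = first_pair_coeff (pair 1) f"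
  define z where "z = gmul (pair_factor (1 / (real k - real n - 1)) n) h"
  define x where "x = (\<lambda>S. 1 * (\<lambda>S. 1 * f S + (-1) * y S) S + (-1) * z S)"
    \<comment> \<open>\<open>f - y - z\<close>, written in the shape of \<open>fharm_lincomb\<close>\<close>
  have y_span: "y \<in> gspan (mixed_products k n)"
    unfolding y_def by (rule first_pair_mixed_part(1)[OF assms(1,4)])
  have "h \<in> fharm (k - card (pair 1)) 2 n"
    unfolding h_def by (rule first_pair_coeff_fharm[OF assms(1,4)]) (simp_all add: pair_nonempty)
  then have h: "h \<in> fharm (k - 2) 2 n"
    using card_pair[of 1] by simp
  then have hh: "homog h (k - 2) 2 n"
    by (simp add: fharm_iff)
  have "x S = 0" if "pair 1 \<inter> S \<noteq> {}" for S
    using first_pair_expansion[OF that, of f] omega_mul_tail_vanishes[OF hh that]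
      first_pair_mixed_part(2)[OF assms(1,4), of S]
    unfolding x_def y_def z_def h_def gmul_pair_factor[OF hh[unfolded h_def]] by simp
  moreover have "x \<in> fharm k 1 n"
  proof -
    have "y \<in> fharm k 1 n"
      using mixed_span_subset_fharm[OF assms(1)] assms(2) y_span by (meson less_imp_le subsetD)
    moreover have "z \<in> fharm k 1 n"
      unfolding z_def using pair_factor_mul_fharm[OF assms(1) _ assms(3) h] assms(2) by simp
    ultimately show ?thesis
      unfolding x_def using assms(4) by (intro fharm_lincomb) simp_all
  qed
  ultimately have "x \<in> fharm k 2 n"
    using fharm_tail_if_vanishes[OF assms(1)] by blast
  moreover have "f = gadd (gadd x y) z"
    unfolding x_def gadd_def by simp
  ultimately show thesis
    using that y_span h unfolding z_def by blast
qed

text \<open>Evaluating at \<open>T \<union> {1, 2}\<close> isolates \<open>h T\<close>: the first summand lives in the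
  variables \<open>\<theta>\<^sub>3, \<dots>\<close> and every mixed product contains exactly one of \<open>\<theta>\<^sub>1, \<theta>\<^sub>2\<close>.\<close>
lemma fharm_decompose_unique:
  assumes "x \<in> fharm k 2 n" "y \<in> gspan (mixed_products k n)" "h \<in> fharm (k - 2) 2 n"
    and sum_zero: "gadd (gadd x y) (gmul (pair_factor c n) h) = gzero"
  shows "x = gzero \<and> y = gzero \<and> gmul (pair_factor c n) h = gzero"
proof -
  have hx: "homog x k 2 n" and hh: "homog h (k - 2) 2 n"
    using assms(1,3) by (simp_all add: fharm_iff)
  define z where "z = gmul (pair_factor c n) h"
  have sum: "x S + y S + z S = 0" for S
    using fun_cong[OF sum_zero, of S] unfolding z_def gadd_def gzero_def by simp
  have x_tail: "x S = 0" if "1 \<in> S \<or> 2 \<in> S" for S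
    using that by (intro homog_tail_vanishes[OF hx]) (auto simp: pair_one)
  have "h T = 0" for T
  proof (cases "pair 1 \<inter> T = {}")
    case True
    have "1 \<in> T \<union> pair 1" "2 \<in> T \<union> pair 1"
      by (auto simp: pair_one)
    then have "x (T \<union> pair 1) = 0" "y (T \<union> pair 1) = 0"
      using x_tail mixed_span_support[OF assms(2)] by blast+
    then show ?thesis
      using sum[of "T \<union> pair 1"] gmul_pair_factor_first_pair[OF hh True] unfolding z_def by simp
  next
    case False
    then show ?thesis
      by (rule homog_tail_vanishes[OF hh])
  qed
  then have z_zero: "z S = 0" for S
    unfolding z_def gmul_pair_factor[OF hh] lmul_mono_def omega_mul_def by simp
  have y_zero: "y S = 0" for S
  proof (cases "1 \<in> S \<or> 2 \<in> S")
    case True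
    then show ?thesis
      using sum[of S] z_zero[of S] x_tail[OF True] by simp
  next
    case False
    then show ?thesis
      using mixed_span_support[OF assms(2)] by blast
  qed
  have "x S = 0" for S
    using sum[of S] z_zero[of S] y_zero[of S] by simp
  with y_zero z_zero show ?thesis
    unfolding z_def gzero_def by (simp add: fun_eq_iff)
qed

lemma fharm_dsum3:
  assumes "1 \<le> n" "1 < k" "k \<le> n"
  shows "dsum3 (fharm k 1 n) (fharm k 2 n) (gspan (mixed_products k n))
           {gmul (pair_factor (1 / (real k - real n - 1)) n) h | h. h \<in> fharm (k - 2) 2 n}"
    (is "dsum3 _ _ ?G ?Q")
  unfolding dsum3_def
proof (intro conjI ballI impI equalityI subsetI)
  fix f assume "f \<in> fharm k 1 n"
  then obtain x y h where "x \<in> fharm k 2 n" "y \<in> ?G" "h \<in> fharm (k - 2) 2 n"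
    "f = gadd (gadd x y) (gmul (pair_factor (1 / (real k - real n - 1)) n) h)"
    by (rule fharm_decompose[OF assms])
  then show "f \<in> {gadd (gadd a b) c | a b c. a \<in> fharm k 2 n \<and> b \<in> ?G \<and> c \<in> ?Q}"
    by blast
next
  fix f assume "f \<in> {gadd (gadd a b) c | a b c. a \<in> fharm k 2 n \<and> b \<in> ?G \<and> c \<in> ?Q}"
  then obtain x y h where f: "f = gadd (gadd x y) (gmul (pair_factor (1 / (real k - real n - 1)) n) h)"
    and "x \<in> fharm k 2 n" "y \<in> ?G" "h \<in> fharm (k - 2) 2 n"
    by blast
  then have "x \<in> fharm k 1 n" "y \<in> fharm k 1 n"
    "gmul (pair_factor (1 / (real k - real n - 1)) n) h \<in> fharm k 1 n"
    using fharm_tail_subset[OF assms(1)] mixed_span_subset_fharm[OF assms(1), of k]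
      pair_factor_mul_fharm[OF assms(1) _ assms(3)] assms(2) by auto
  then show "f \<in> fharm k 1 n"
    unfolding f by (intro fharm_gadd) simp_all
next
  fix x y z assume "x \<in> fharm k 2 n" "y \<in> ?G" "z \<in> ?Q" and sum_zero: "gadd (gadd x y) z = gzero"
  from \<open>z \<in> ?Q\<close> obtain h where "h \<in> fharm (k - 2) 2 n"
    and z: "z = gmul (pair_factor (1 / (real k - real n - 1)) n) h"
    by blast
  have "x = gzero \<and> y = gzero \<and> z = gzero"
    unfolding z by (rule fharm_decompose_unique[OF \<open>x \<in> _\<close> \<open>y \<in> ?G\<close> \<open>h \<in> _\<close> sum_zero[unfolded z]])
  then show "x = gzero" "y = gzero" "z = gzero"
    by simp_all
qed

lemma fharm_111_meets_pair_one:
  assumes "b \<in> fharm 1 1 1" "b S \<noteq> 0"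
  shows "pair 1 \<inter> S \<noteq> {}"
proof -
  have "pair 1 = {2*1 - 1 .. 2*1}"
    by (rule pair_eq_atLeastAtMost) simp
  then have "S \<subseteq> pair 1" "card S = 1"
    using assms unfolding fharm_one_iff[OF order_refl] homog_def by auto
  then show ?thesis
    by (metis card.empty inf.absorb_iff2 zero_neq_one)
qed

lemma fharm_one_split:
  assumes "1 \<le> n" "f \<in> fharm 1 1 n"
  shows "f \<in> {gadd a b | a b. a \<in> fharm 1 2 n \<and> b \<in> fharm 1 1 1}"
proof -
  define a where "a S = (if pair 1 \<inter> S = {} then f S else 0)" for S
  define b where "b S = (if pair 1 \<inter> S = {} then 0 else f S)" for S
  have hf: "homog f 1 1 n"
    using assms(2) unfolding fharm_one_iff[OF order_refl] .
  have "homog a 1 2 n"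
    unfolding homog_def
  proof (intro allI impI)
    fix S assume "a S \<noteq> 0"
    then have "pair 1 \<inter> S = {}" "S \<subseteq> {1..2*n}" "card S = 1"
      using hf unfolding a_def homog_def by (auto split: if_splits)
    then show "S \<subseteq> {2*2 - 1 .. 2*n} \<and> card S = 1"
      using subset_tail_if_disjoint_pair_one by simp
  qed
  moreover have "homog b 1 1 1"
    unfolding homog_def
  proof (intro allI impI)
    fix S assume "b S \<noteq> 0"
    then have "pair 1 \<inter> S \<noteq> {}" "card S = 1"
      using hf unfolding b_def homog_def by (auto split: if_splits)
    moreover obtain x where "S = {x}"
      using \<open>card S = 1\<close> card_1_singletonE by blast
    moreover have "pair 1 = {2*1 - 1 .. 2*1}"
      by (rule pair_eq_atLeastAtMost) simp
    ultimately show "S \<subseteq> {2*1 - 1 .. 2*1} \<and> card S = 1"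
      by blast
  qed
  moreover have "f = gadd a b"
    unfolding gadd_def a_def b_def by (simp add: fun_eq_iff)
  ultimately show ?thesis
    unfolding fharm_one_iff[OF order_refl] fharm_one_iff[OF one_le_numeral] by blast
qed

lemma fharm_one_dsum2:
  assumes "1 \<le> n"
  shows "dsum2 (fharm 1 1 n) (fharm 1 2 n) (fharm 1 1 1)"
proof -
  have "gadd a b \<in> fharm 1 1 n" if "a \<in> fharm 1 2 n" "b \<in> fharm 1 1 1" for a b
  proof -
    have "homog a 1 2 n" "homog b 1 1 1"
      using that unfolding fharm_one_iff[OF order_refl] fharm_one_iff[OF one_le_numeral] by simp_all
    then have "homog a 1 1 n" "homog b 1 1 n"
      using assms by (simp_all add: homog_mono_range)
    then show ?thesis
      using homog_lincomb[of a 1 1 n b 1 1] unfolding fharm_one_iff[OF order_refl] gadd_def by simp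
  qed
  moreover have "a = gzero \<and> b = gzero"
    if "a \<in> fharm 1 2 n" "b \<in> fharm 1 1 1" and sum_zero: "gadd a b = gzero" for a b
  proof -
    have ha: "homog a 1 2 n"
      using that(1) by (simp add: fharm_iff)
    have sum: "a S + b S = 0" for S
      using fun_cong[OF sum_zero, of S] unfolding gadd_def gzero_def by simp
    have "b S = 0" for S
    proof (rule ccontr)
      assume "b S \<noteq> 0"
      moreover have "a S = 0"
        using homog_tail_vanishes[OF ha fharm_111_meets_pair_one[OF that(2) \<open>b S \<noteq> 0\<close>]] .
      ultimately show False
        using sum[of S] by simp
    qed
    with sum show ?thesis
      unfolding gzero_def by (simp add: fun_eq_iff)
  qed
  ultimately show ?thesis
    unfolding dsum2_def using fharm_one_split[OF assms] by blast
qed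

theorem mainTheorem3:
  fixes n k :: nat
  assumes "n \<ge> 1"
  shows "(1 < k \<and> k \<le> n \<longrightarrow>
           dsum3 (fharm k 1 n)
             (fharm k 2 n)
             (gspan {gmul a b | a b. a \<in> fharm 1 1 1 \<and> b \<in> fharm (k - 1) 2 n})
             {gmul (gadd (gmul (theta 1) (theta 2))
                         (gscale (1 / (real k - real n - 1))
                            (\<lambda>S. \<Sum>j=2..n. gmul (theta (2*j - 1)) (theta (2*j)) S))) h
               | h. h \<in> fharm (k - 2) 2 n})
       \<and> (k = 1 \<longrightarrow> dsum2 (fharm 1 1 n) (fharm 1 2 n) (fharm 1 1 1))"
  unfolding omega_def[symmetric] pair_factor_def[symmetric]
  using fharm_dsum3[OF assms] fharm_one_dsum2[OF assms] by blast

end
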